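(* Let $\alpha\in(0,1)$, $T>0$, $\mathcal{A}\in\mathbb{C}^{d\times d}$, $x_0\in\mathbb{C}^d$, $\ell_1,\dots,\ell_d\in\mathbb{C}$, $\delta_1,\dots,\delta_d>0$, and $\vartheta(t)=(\ell_1t^{\delta_1},\dots,\ell_dt^{\delta_d})^\top$. Then $x(t)=\mathcal{E}_\alpha(\mathcal{A}t)x_0+\sum_{j=0}^\infty\mathcal{A}^j\nu_j(t)$, where $$\nu_j(t)=\Big(\ell_k\frac{\prod_{i=2}^{j+2}\Gamma(i-\alpha+\delta_k)}{\Gamma(2-\alpha)^{j+1}\prod_{i=2}^{j+2}\Gamma(i+\delta_k)}t^{j+1+\delta_k}\Big)_{k=1,\dots,d}^\top,$$ satisfies $x(0)=x_0$ and ${}^LD^\alpha x(t)=\mathcal{A}x(t)+\vartheta(t)$ for every $t\in(0,T]$.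
   Context: $\mathcal{E}_\alpha(s)=\sum_{n=0}^\infty\frac{s^n}{\Gamma(2-\alpha)^n\prod_{j=1}^n\frac{\Gamma(j+1)}{\Gamma(j+1-\alpha)}}$ (matrix arguments allowed). Caputo derivative ${}^CD^\alpha x(t)=\frac{1}{\Gamma(1-\alpha)}\int_0^t (t-\tau)^{-\alpha}x'(\tau)d\tau$; L-fractional derivative ${}^LD^\alpha x(t)=\frac{\Gamma(2-\alpha)}{t^{1-\alpha}}{}^CD^\alpha x(t)$ (componentwise). *)

theory Defs
  imports "HOL-Analysis.Analysis"
begin

primrec matpow :: "'a::semiring_1 ^'n^'n \<Rightarrow> nat \<Rightarrow> 'a^'n^'n" where
  "matpow M 0 = mat 1"
| "matpow M (Suc k) = M ** matpow M k"

definition mittag_coeff :: "real \<Rightarrow> nat \<Rightarrow> real" where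
  "mittag_coeff \<alpha> n = Gamma (2 - \<alpha>) ^ n * (\<Prod>j=1..n. Gamma (real j + 1) / Gamma (real j + 1 - \<alpha>))"

definition mittag_mat :: "real \<Rightarrow> complex^'d^'d \<Rightarrow> complex^'d^'d" where
  "mittag_mat \<alpha> M = (\<Sum>n. (1 / mittag_coeff \<alpha> n) *\<^sub>R matpow M n)"

definition caputo :: "real \<Rightarrow> (real \<Rightarrow> complex^'d) \<Rightarrow> real \<Rightarrow> complex^'d" where
  "caputo \<alpha> x t = (1 / Gamma (1 - \<alpha>)) *\<^sub>R
     integral {0..t} (\<lambda>\<tau>. ((t - \<tau>) powr (- \<alpha>)) *\<^sub>R vector_derivative x (at \<tau>))"

definition L_deriv :: "real \<Rightarrow> (real \<Rightarrow> complex^'d) \<Rightarrow> real \<Rightarrow> complex^'d" where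
  "L_deriv \<alpha> x t = (Gamma (2 - \<alpha>) / t powr (1 - \<alpha>)) *\<^sub>R caputo \<alpha> x t"

end

theory Submission
  imports Defs "HOL-Real_Asymp.Real_Asymp"
begin

text \<open>
  Both parts of \<open>x\<close> are generalised power series \<open>\<Sum>n. a\<^sub>n \<tau>\<^bsup>n+b\<^esup> w\<^sub>n\<close> whose
  majorants \<open>\<Sum>n. \<bar>a\<^sub>n\<bar> r\<^sup>n \<parallel>w\<^sub>n\<parallel>\<close> converge for every \<open>r\<close>: the Mittag-Leffler part is
  \<open>x0\<close> plus such a series with \<open>b = 1\<close>, and the forcing part along the \<open>k\<close>-th axis is one
  with \<open>b = 1 + \<delta>\<^sub>k\<close>. Such a series can be differentiated termwise for \<open>\<tau> > 0\<close> and, by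
  dominated convergence, integrated termwise against the kernel \<open>(t - \<tau>)\<^bsup>-\<alpha>\<^esup>\<close>; the Beta
  integral then shows that the L-derivative maps \<open>\<tau>\<^sup>p\<close> to
  \<open>\<Gamma>(2-\<alpha>) \<Gamma>(p+1) / \<Gamma>(p+1-\<alpha>) \<tau>\<^bsup>p-1\<^esup>\<close>.
  For the Mittag-Leffler coefficients \<open>c\<^sub>n\<close> this factor is \<open>c\<^sub>n\<^sub>+\<^sub>1 / c\<^sub>n\<close>, so the series is
  mapped to \<open>A\<close> times itself; for the coefficients of \<open>\<nu>\<^sub>j\<close> it turns coefficient \<open>j + 1\<close> into
  coefficient \<open>j\<close>, so the forcing series is mapped to \<open>A\<close> times itself plus its leading term
  \<open>t\<^bsup>\<delta>\<^sub>k\<^esup> \<ell>\<^sub>k\<close>, which is \<open>\<theta> t\<close>. All convergence questions reduce by the ratio test to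
  \<open>\<Gamma>(n+c-\<alpha>) / \<Gamma>(n+c) \<longrightarrow> 0\<close>, a consequence of the log-convexity of \<open>\<Gamma>\<close>.
\<close>

lemma Gamma_plus1_of_pos: "(x::real) > 0 \<Longrightarrow> Gamma (x + 1) = x * Gamma x"
  by (rule Gamma_plus1) (auto dest: nonpos_Ints_nonpos)

text \<open>Log-convexity of \<open>Gamma\<close> between \<open>x - 1\<close> and \<open>x\<close>.\<close>
lemma Gamma_shift_ratio_le:
  fixes x a :: real
  assumes x: "x > 1" and a: "0 \<le> a" "a \<le> 1"
  shows "Gamma (x - a) / Gamma x \<le> (x - 1) powr (- a)"
proof -
  have pos: "Gamma (x - 1) > 0" "Gamma x > 0" "Gamma (x - a) > 0"
    using x a by (auto intro!: Gamma_real_pos)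
  have "(ln \<circ> Gamma) ((1 - (1 - a)) *\<^sub>R (x - 1) + (1 - a) *\<^sub>R x)
      \<le> (1 - (1 - a)) * (ln \<circ> Gamma) (x - 1) + (1 - a) * (ln \<circ> Gamma) x"
    using a x by (intro convex_onD[OF log_convex_Gamma_real]) auto
  moreover have "(1 - (1 - a)) *\<^sub>R (x - 1) + (1 - a) *\<^sub>R x = x - a"
    by (simp add: algebra_simps)
  moreover have "ln (Gamma x) = ln (x - 1) + ln (Gamma (x - 1))"
    using Gamma_plus1_of_pos[of "x - 1"] pos x by (simp add: ln_mult_pos)
  ultimately have "ln (Gamma (x - a)) \<le> ln (Gamma x) - a * ln (x - 1)"
    by (simp add: algebra_simps)
  hence "Gamma (x - a) \<le> exp (ln (Gamma x) - a * ln (x - 1))"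
    using pos by (metis exp_le_cancel_iff exp_ln)
  also have "\<dots> = Gamma x * (x - 1) powr (- a)"
    using pos x by (simp add: exp_diff powr_def exp_minus divide_inverse mult.commute)
  finally show ?thesis
    using pos by (simp add: divide_simps mult.commute)
qed

lemma Gamma_shift_ratio_tendsto_0:
  fixes a c :: real
  assumes "0 < a" "a \<le> 1" "c > 1"
  shows "(\<lambda>n. Gamma (real n + c - a) / Gamma (real n + c)) \<longlonglongrightarrow> 0"
proof (rule tendsto_sandwich[of "\<lambda>_. 0" _ _ "\<lambda>n. (real n + c - 1) powr (- a)"])
  show "\<forall>\<^sub>F n in sequentially. 0 \<le> Gamma (real n + c - a) / Gamma (real n + c)"
    using assms by (auto intro!: always_eventually divide_nonneg_nonneg less_imp_le[OF Gamma_real_pos])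
  show "\<forall>\<^sub>F n in sequentially. Gamma (real n + c - a) / Gamma (real n + c) \<le> (real n + c - 1) powr (- a)"
    using assms by (auto intro!: always_eventually Gamma_shift_ratio_le[of "real n + c" a for n, simplified])
  show "(\<lambda>n. (real n + c - 1) powr (- a)) \<longlonglongrightarrow> 0"
    using assms by real_asymp
qed simp

lemma summable_ratio_tendsto_0:
  fixes a :: "nat \<Rightarrow> real"
  assumes nz: "\<And>n. a n \<noteq> 0" and lim: "(\<lambda>n. a (Suc n) / a n) \<longlonglongrightarrow> 0" and r: "r \<ge> 0"
  shows "summable (\<lambda>n. \<bar>a n\<bar> * r ^ n)"
proof -
  have "\<forall>\<^sub>F n in sequentially. \<bar>a (Suc n) / a n\<bar> < 1 / (2 * (r + 1))"
    using lim r by (intro order_tendstoD) (auto simp: tendsto_rabs_zero_iff dest: tendsto_rabs)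
  then obtain N where N: "\<And>n. n \<ge> N \<Longrightarrow> \<bar>a (Suc n) / a n\<bar> < 1 / (2 * (r + 1))"
    by (auto simp: eventually_sequentially)
  show ?thesis
  proof (rule summable_ratio_test[of "1/2" N])
    fix n assume n: "N \<le> n"
    have "\<bar>a (Suc n)\<bar> \<le> \<bar>a n\<bar> / (2 * (r + 1))"
      using N[OF n] nz[of n] r by (simp add: abs_divide divide_simps)
    hence "\<bar>a (Suc n)\<bar> * r ^ Suc n \<le> \<bar>a n\<bar> / (2 * (r + 1)) * r ^ Suc n"
      using r by (intro mult_right_mono) auto
    also have "\<dots> = (\<bar>a n\<bar> * r ^ n) * (r / (2 * (r + 1)))"
      by simp
    also have "\<dots> \<le> (\<bar>a n\<bar> * r ^ n) * (1/2)"
      using r by (intro mult_left_mono) (auto simp: divide_simps)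
    finally show "norm (\<bar>a (Suc n)\<bar> * r ^ Suc n) \<le> 1/2 * norm (\<bar>a n\<bar> * r ^ n)"
      using r by simp
  qed simp
qed

definition entire_coeffs :: "(nat \<Rightarrow> real) \<Rightarrow> (nat \<Rightarrow> 'v::real_normed_vector) \<Rightarrow> bool" where
  "entire_coeffs a w \<longleftrightarrow> (\<forall>r\<ge>0. summable (\<lambda>n. \<bar>a n\<bar> * r ^ n * norm (w n)))"

lemma entire_coeffsD: "entire_coeffs a w \<Longrightarrow> r \<ge> 0 \<Longrightarrow> summable (\<lambda>n. \<bar>a n\<bar> * r ^ n * norm (w n))"
  by (simp add: entire_coeffs_def)

lemma entire_coeffs_ratio_tendsto_0:
  assumes nz: "\<And>n. a n \<noteq> 0" and lim: "(\<lambda>n. a (Suc n) / a n) \<longlonglongrightarrow> 0"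
    and K: "K \<ge> 0" and w: "\<And>n. norm (w n) \<le> C * K ^ n"
  shows "entire_coeffs a w"
  unfolding entire_coeffs_def
proof (intro allI impI)
  fix r :: real assume r: "r \<ge> 0"
  show "summable (\<lambda>n. \<bar>a n\<bar> * r ^ n * norm (w n))"
  proof (rule summable_comparison_test'[of "\<lambda>n. C * (\<bar>a n\<bar> * (r * K) ^ n)"])
    show "summable (\<lambda>n. C * (\<bar>a n\<bar> * (r * K) ^ n))"
      using summable_ratio_tendsto_0[OF nz lim, of "r * K"] K r by (intro summable_mult) auto
    fix n
    have "\<bar>a n\<bar> * r ^ n * norm (w n) \<le> \<bar>a n\<bar> * r ^ n * (C * K ^ n)"
      using r by (intro mult_left_mono w) auto
    thus "norm (\<bar>a n\<bar> * r ^ n * norm (w n)) \<le> C * (\<bar>a n\<bar> * (r * K) ^ n)"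
      using r by (simp add: power_mult_distrib algebra_simps)
  qed
qed

lemma abs_of_nat_plus_le_exp2: "\<bar>real n + b\<bar> \<le> (1 + \<bar>b\<bar>) * 2 ^ n"
proof -
  have "real n \<le> 2 ^ n"
    using less_exp[of n] by (metis of_nat_le_iff of_nat_numeral of_nat_power less_imp_le)
  moreover have "\<bar>b\<bar> * 1 \<le> \<bar>b\<bar> * 2 ^ n"
    by (intro mult_left_mono) simp_all
  moreover have "\<bar>real n + b\<bar> \<le> real n + \<bar>b\<bar>"
    using abs_triangle_ineq[of "real n" b] by simp
  ultimately show ?thesis
    unfolding distrib_right mult_1 by linarith
qed

lemma entire_coeffs_mult_index:
  assumes "entire_coeffs a w"
  shows "entire_coeffs (\<lambda>n. a n * (real n + b)) w"
  unfolding entire_coeffs_def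
proof (intro allI impI)
  fix r :: real assume r: "r \<ge> 0"
  show "summable (\<lambda>n. \<bar>a n * (real n + b)\<bar> * r ^ n * norm (w n))"
  proof (rule summable_comparison_test'[of "\<lambda>n. (1 + \<bar>b\<bar>) * (\<bar>a n\<bar> * (2 * r) ^ n * norm (w n))"])
    show "summable (\<lambda>n. (1 + \<bar>b\<bar>) * (\<bar>a n\<bar> * (2 * r) ^ n * norm (w n)))"
      using entire_coeffsD[OF assms, of "2 * r"] r by (intro summable_mult) auto
    fix n
    have "\<bar>a n * (real n + b)\<bar> * r ^ n * norm (w n) \<le> \<bar>a n\<bar> * ((1 + \<bar>b\<bar>) * 2 ^ n) * r ^ n * norm (w n)"
      unfolding abs_mult using r
      by (intro mult_right_mono mult_left_mono abs_of_nat_plus_le_exp2) simp_all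
    also have "\<dots> = (1 + \<bar>b\<bar>) * (\<bar>a n\<bar> * (2 * r) ^ n * norm (w n))"
      by (simp add: power_mult_distrib)
    finally show "norm (\<bar>a n * (real n + b)\<bar> * r ^ n * norm (w n)) \<le> (1 + \<bar>b\<bar>) * (\<bar>a n\<bar> * (2 * r) ^ n * norm (w n))"
      using r by simp
  qed
qed

text \<open>Meant for \<open>\<tau> > 0\<close>: since \<open>0 powr p = 0\<close> even for \<open>p \<le> 0\<close>, the value at \<open>\<tau> = 0\<close> is always \<open>0\<close>.\<close>
definition frac_series :: "(nat \<Rightarrow> real) \<Rightarrow> real \<Rightarrow> (nat \<Rightarrow> 'v::real_normed_vector) \<Rightarrow> real \<Rightarrow> 'v" where
  "frac_series a b w \<tau> = (\<Sum>n. (a n * \<tau> powr (real n + b)) *\<^sub>R w n)"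

lemma frac_series_at_0 [simp]: "frac_series a b w 0 = 0"
  by (simp add: frac_series_def)

lemma norm_frac_series_term_le:
  assumes "0 \<le> \<tau>" "\<tau> \<le> r"
  shows "norm ((a n * \<tau> powr (real n + b)) *\<^sub>R w n) \<le> \<tau> powr b * (\<bar>a n\<bar> * r ^ n * norm (w n))"
proof (cases "\<tau> = 0")
  case False
  with assms have \<tau>: "\<tau> > 0" by simp
  then have "norm ((a n * \<tau> powr (real n + b)) *\<^sub>R w n) = \<tau> powr b * (\<bar>a n\<bar> * \<tau> ^ n * norm (w n))"
    by (simp add: abs_mult powr_add powr_realpow)
  also have "\<dots> \<le> \<tau> powr b * (\<bar>a n\<bar> * r ^ n * norm (w n))"
    using assms by (intro mult_left_mono mult_right_mono power_mono) auto
  finally show ?thesis .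
qed simp

lemma summable_norm_frac_series_terms:
  assumes "entire_coeffs a w" "\<tau> \<ge> 0"
  shows "summable (\<lambda>n. norm ((a n * \<tau> powr (real n + b)) *\<^sub>R w n))"
proof (rule summable_comparison_test')
  show "summable (\<lambda>n. \<tau> powr b * (\<bar>a n\<bar> * \<tau> ^ n * norm (w n)))"
    by (rule summable_mult[OF entire_coeffsD[OF assms]])
  show "norm (norm ((a n * \<tau> powr (real n + b)) *\<^sub>R w n)) \<le> \<tau> powr b * (\<bar>a n\<bar> * \<tau> ^ n * norm (w n))" for n
    using norm_frac_series_term_le[OF assms(2) order_refl] by simp
qed

lemma frac_series_sums:
  fixes w :: "nat \<Rightarrow> 'v::banach"
  assumes "entire_coeffs a w" "\<tau> \<ge> 0"
  shows "(\<lambda>n. (a n * \<tau> powr (real n + b)) *\<^sub>R w n) sums frac_series a b w \<tau>"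
  unfolding frac_series_def
  by (rule summable_sums[OF summable_norm_cancel[OF summable_norm_frac_series_terms[OF assms]]])

lemma has_vector_derivative_series:
  fixes f :: "nat \<Rightarrow> real \<Rightarrow> 'v::banach"
  assumes S: "convex S" "open S"
    and f': "\<And>n x. x \<in> S \<Longrightarrow> (f n has_vector_derivative f' n x) (at x)"
    and unif: "uniform_limit S (\<lambda>n x. \<Sum>i<n. f' i x) g' sequentially"
    and x0: "x0 \<in> S" "summable (\<lambda>n. f n x0)" and x: "x \<in> S"
  shows "((\<lambda>x. \<Sum>n. f n x) has_vector_derivative g' x) (at x)"
proof -
  have "\<exists>g. \<forall>x\<in>S. (\<lambda>n. f n x) sums g x \<and> (g has_derivative (\<lambda>h. h *\<^sub>R g' x)) (at x within S)"
  proof (rule has_derivative_series[of S f "\<lambda>n x h. h *\<^sub>R f' n x" "\<lambda>x h. h *\<^sub>R g' x" x0])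
    show "convex S" "x0 \<in> S" "(\<lambda>n. f n x0) sums (\<Sum>n. f n x0)"
      using S x0 by (simp_all add: summable_sums)
    show "(f n has_derivative (\<lambda>h. h *\<^sub>R f' n x)) (at x within S)" if "x \<in> S" for n x
      using f'[OF that] by (simp add: has_vector_derivative_def has_derivative_at_withinI)
    fix e :: real assume "e > 0"
    with unif have "\<forall>\<^sub>F n in sequentially. \<forall>x\<in>S. dist (\<Sum>i<n. f' i x) (g' x) < e"
      by (rule uniform_limitD)
    then show "\<forall>\<^sub>F n in sequentially. \<forall>x\<in>S. \<forall>h. norm ((\<Sum>i<n. h *\<^sub>R f' i x) - h *\<^sub>R g' x) \<le> e * norm h"
    proof (rule eventually_mono, intro ballI allI)
      fix n x h assume "\<forall>x\<in>S. dist (\<Sum>i<n. f' i x) (g' x) < e" "x \<in> S"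
      then have "\<bar>h\<bar> * dist (\<Sum>i<n. f' i x) (g' x) \<le> \<bar>h\<bar> * e"
        by (intro mult_left_mono) auto
      then show "norm ((\<Sum>i<n. h *\<^sub>R f' i x) - h *\<^sub>R g' x) \<le> e * norm h"
        by (simp add: dist_norm scaleR_sum_right[symmetric] scaleR_diff_right[symmetric] mult.commute)
    qed
  qed
  then obtain g where g: "\<And>x. x \<in> S \<Longrightarrow> (\<lambda>n. f n x) sums g x"
    "\<And>x. x \<in> S \<Longrightarrow> (g has_derivative (\<lambda>h. h *\<^sub>R g' x)) (at x within S)"
    by blast
  have "(g has_vector_derivative g' x) (at x)"
    using g(2)[OF x] at_within_open[OF x S(2)] by (simp add: has_vector_derivative_def)
  then show ?thesis
    by (rule has_vector_derivative_transform_within_open[OF _ S(2) x]) (use g(1) in \<open>simp add: sums_iff\<close>)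
qed

lemma powr_le_powr_add_powr:
  fixes \<tau> l u c :: real
  assumes "0 < l" "l \<le> \<tau>" "\<tau> \<le> u"
  shows "\<tau> powr c \<le> l powr c + u powr c"
proof (cases "c \<ge> 0")
  case True
  then have "\<tau> powr c \<le> u powr c"
    using assms by (intro powr_mono2) auto
  then show ?thesis
    by (smt (verit) powr_ge_zero)
next
  case False
  then have "\<tau> powr c \<le> l powr c"
    using assms by (intro powr_mono2') auto
  then show ?thesis
    by (smt (verit) powr_ge_zero)
qed

lemma has_vector_derivative_frac_series:
  fixes w :: "nat \<Rightarrow> 'v::banach"
  assumes coeffs: "entire_coeffs a w" and t: "t > 0"
  shows "(frac_series a b w has_vector_derivative
           frac_series (\<lambda>n. a n * (real n + b)) (b - 1) w t) (at t)"
proof -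
  define a' where "a' n = a n * (real n + b)" for n
  define f' where "f' n \<tau> = (a' n * \<tau> powr (real n + (b - 1))) *\<^sub>R w n" for n \<tau>
  define S where "S = {t/2<..<2*t}"
  have S: "convex S" "open S" "t \<in> S"
    using t by (auto simp: S_def)
  have coeffs': "entire_coeffs a' w"
    unfolding a'_def by (rule entire_coeffs_mult_index[OF coeffs])
  have term_deriv: "((\<lambda>\<tau>. (a n * \<tau> powr (real n + b)) *\<^sub>R w n) has_vector_derivative f' n \<tau>) (at \<tau>)"
    if "\<tau> \<in> S" for n \<tau>
    using that t unfolding f'_def a'_def S_def
    by (auto intro!: derivative_eq_intros simp: algebra_simps)
  define K where "K = (t/2) powr (b - 1) + (2*t) powr (b - 1)"
  have bound: "norm (f' n \<tau>) \<le> K * (\<bar>a' n\<bar> * (2*t) ^ n * norm (w n))" if "\<tau> \<in> S" for n \<tau>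
  proof -
    have "norm (f' n \<tau>) \<le> \<tau> powr (b - 1) * (\<bar>a' n\<bar> * (2*t) ^ n * norm (w n))"
      unfolding f'_def using that t by (intro norm_frac_series_term_le) (auto simp: S_def)
    also have "\<dots> \<le> K * (\<bar>a' n\<bar> * (2*t) ^ n * norm (w n))"
      unfolding K_def using that t by (intro mult_right_mono powr_le_powr_add_powr) (auto simp: S_def)
    finally show ?thesis .
  qed
  have majorant: "summable (\<lambda>n. K * (\<bar>a' n\<bar> * (2*t) ^ n * norm (w n)))"
    using t by (intro summable_mult entire_coeffsD[OF coeffs']) simp
  have "uniform_limit S (\<lambda>n \<tau>. \<Sum>i<n. f' i \<tau>) (\<lambda>\<tau>. \<Sum>i. f' i \<tau>) sequentially"
    by (rule Weierstrass_m_test[OF bound majorant])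
  then have "((\<lambda>\<tau>. \<Sum>n. (a n * \<tau> powr (real n + b)) *\<^sub>R w n) has_vector_derivative (\<Sum>n. f' n t)) (at t)"
    using S frac_series_sums[OF coeffs less_imp_le[OF t]]
    by (intro has_vector_derivative_series[OF S(1,2) term_deriv]) (auto simp: sums_iff)
  then show ?thesis
    unfolding frac_series_def f'_def a'_def by (simp add: algebra_simps)
qed

lemma has_integral_powr_Beta:
  fixes p q t :: real
  assumes p: "p > 0" and q: "q > 0" and t: "t > 0"
  shows "((\<lambda>\<tau>. \<tau> powr (p - 1) * (t - \<tau>) powr (q - 1)) has_integral Beta p q * t powr (p + q - 1)) {0..t}"
proof -
  let ?g = "\<lambda>s. s powr (p - 1) * (1 - s) powr (q - 1)"
  have "(?g has_integral Beta p q) (cbox 0 1)"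
    using has_integral_Beta_real[OF p q] by simp
  from has_integral_affinity[OF this, of "1/t" 0] t
  have "((\<lambda>\<tau>. ?g (\<tau> / t)) has_integral t * Beta p q) ((\<lambda>\<tau>. t * \<tau>) ` cbox 0 1)"
    by simp
  moreover have "(\<lambda>\<tau>. t * \<tau>) ` cbox 0 1 = {0..t}"
    using t by (auto simp: image_iff field_simps intro!: bexI[of _ "\<tau> / t" for \<tau>])
  ultimately have "((\<lambda>\<tau>. t powr (p + q - 2) * ?g (\<tau> / t)) has_integral t powr (p + q - 2) * (t * Beta p q)) {0..t}"
    by (intro has_integral_mult_right) simp
  also have "t powr (p + q - 2) * (t * Beta p q) = Beta p q * t powr (p + q - 1)"
    using powr_add[of t "p + q - 2" 1] t by simp
  finally have scaled: "((\<lambda>\<tau>. t powr (p + q - 2) * ?g (\<tau> / t)) has_integral Beta p q * t powr (p + q - 1)) {0..t}" .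
  have "t powr (p + q - 2) * ?g (\<tau> / t) = \<tau> powr (p - 1) * (t - \<tau>) powr (q - 1)"
    if "\<tau> \<in> {0..t}" for \<tau>
  proof -
    have "1 - \<tau> / t = (t - \<tau>) / t"
      using t by (simp add: field_simps)
    then have "?g (\<tau> / t) = (\<tau> powr (p - 1) / t powr (p - 1)) * ((t - \<tau>) powr (q - 1) / t powr (q - 1))"
      using that t by (simp add: powr_divide)
    moreover have "t powr (p + q - 2) = t powr (p - 1) * t powr (q - 1)"
      using powr_add[of t "p - 1" "q - 1"] by simp
    moreover have "t powr (p - 1) > 0" "t powr (q - 1) > 0"
      using t by auto
    ultimately show ?thesis
      by (simp add: field_simps)
  qed
  then show ?thesis
    by (intro has_integral_spike_finite[OF finite.emptyI _ scaled]) simp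
qed

lemma
  fixes w :: "nat \<Rightarrow> 'v::euclidean_space"
  assumes coeffs: "entire_coeffs a w" and b: "b > -1" and \<alpha>: "\<alpha> < 1" and t: "t > 0"
  shows integrable_kernel_frac_series:
      "(\<lambda>\<tau>. (t - \<tau>) powr (- \<alpha>) *\<^sub>R frac_series a b w \<tau>) integrable_on {0..t}"
    and sums_integral_kernel_frac_series:
      "(\<lambda>n. (a n * Beta (real n + b + 1) (1 - \<alpha>) * t powr (real n + b + 1 - \<alpha>)) *\<^sub>R w n)
         sums integral {0..t} (\<lambda>\<tau>. (t - \<tau>) powr (- \<alpha>) *\<^sub>R frac_series a b w \<tau>)"
proof -
  define f where "f n \<tau> = (t - \<tau>) powr (- \<alpha>) *\<^sub>R ((a n * \<tau> powr (real n + b)) *\<^sub>R w n)" for n \<tau>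
  define c where "c n = (a n * Beta (real n + b + 1) (1 - \<alpha>) * t powr (real n + b + 1 - \<alpha>)) *\<^sub>R w n" for n
  define M where "M = (\<Sum>n. \<bar>a n\<bar> * t ^ n * norm (w n))"
  define h where "h \<tau> = M * (\<tau> powr (b + 1 - 1) * (t - \<tau>) powr ((1 - \<alpha>) - 1))" for \<tau>
  have term_integral: "(f n has_integral c n) {0..t}" for n
  proof -
    have "((\<lambda>\<tau>. \<tau> powr (real n + b + 1 - 1) * (t - \<tau>) powr ((1 - \<alpha>) - 1)) has_integral
        Beta (real n + b + 1) (1 - \<alpha>) * t powr (real n + b + 1 + (1 - \<alpha>) - 1)) {0..t}"
      using b \<alpha> t by (intro has_integral_powr_Beta) auto
    from has_integral_scaleR_left[OF has_integral_mult_right[OF this, of "a n"], of "w n"]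
    show ?thesis
      unfolding f_def c_def by (simp add: algebra_simps)
  qed
  have partial_sums: "((\<lambda>\<tau>. \<Sum>n<N. f n \<tau>) has_integral (\<Sum>n<N. c n)) {0..t}" for N
    by (intro has_integral_sum term_integral) auto
  have majorant: "h integrable_on {0..t}"
    unfolding h_def using b \<alpha> t
    by (intro has_integral_integrable[OF has_integral_mult_right[OF has_integral_powr_Beta]]) auto
  have bound: "norm (\<Sum>n<N. f n \<tau>) \<le> h \<tau>" if "\<tau> \<in> {0..t}" for N \<tau>
  proof -
    have "norm (f n \<tau>) \<le> (t - \<tau>) powr (- \<alpha>) * (\<tau> powr b * (\<bar>a n\<bar> * t ^ n * norm (w n)))" for n
      using mult_left_mono[OF norm_frac_series_term_le[of \<tau> t a n b w] powr_ge_zero[of "t - \<tau>" "- \<alpha>"]] that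
      by (simp add: f_def abs_mult mult.assoc)
    then have "norm (\<Sum>n<N. f n \<tau>) \<le> (\<Sum>n<N. (t - \<tau>) powr (- \<alpha>) * (\<tau> powr b * (\<bar>a n\<bar> * t ^ n * norm (w n))))"
      by (intro order.trans[OF norm_sum] sum_mono)
    also have "\<dots> = (t - \<tau>) powr (- \<alpha>) * \<tau> powr b * (\<Sum>n<N. \<bar>a n\<bar> * t ^ n * norm (w n))"
      by (simp add: sum_distrib_left mult.assoc)
    also have "\<dots> \<le> (t - \<tau>) powr (- \<alpha>) * \<tau> powr b * M"
      unfolding M_def using t
      by (intro mult_left_mono sum_le_suminf entire_coeffsD[OF coeffs]) auto
    finally show ?thesis
      by (simp add: h_def mult_ac)
  qed
  have pointwise: "(\<lambda>N. \<Sum>n<N. f n \<tau>) \<longlonglongrightarrow> (t - \<tau>) powr (- \<alpha>) *\<^sub>R frac_series a b w \<tau>"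
    if "\<tau> \<in> {0..t}" for \<tau>
    using sums_scaleR_right[OF frac_series_sums[OF coeffs, of \<tau> b], of "(t - \<tau>) powr (- \<alpha>)"] that
    by (simp add: f_def sums_def)
  note dc = dominated_convergence[OF has_integral_integrable[OF partial_sums] majorant bound pointwise]
  show "(\<lambda>\<tau>. (t - \<tau>) powr (- \<alpha>) *\<^sub>R frac_series a b w \<tau>) integrable_on {0..t}"
    by (rule dc(1))
  show "c sums integral {0..t} (\<lambda>\<tau>. (t - \<tau>) powr (- \<alpha>) *\<^sub>R frac_series a b w \<tau>)"
    using dc(2) unfolding sums_def integral_unique[OF partial_sums] .
qed

text \<open>\<open>L_deriv \<alpha>\<close> maps \<open>\<tau> powr p\<close> to \<open>L_power_coeff \<alpha> p * \<tau> powr (p - 1)\<close>.\<close>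
definition L_power_coeff :: "real \<Rightarrow> real \<Rightarrow> real" where
  "L_power_coeff \<alpha> p = Gamma (2 - \<alpha>) * Gamma (p + 1) / Gamma (p + 1 - \<alpha>)"

lemma L_power_coeff_eq_Beta:
  fixes p t \<alpha> :: real
  assumes p: "p > 0" and t: "t > 0" and \<alpha>: "\<alpha> < 1"
  shows "Gamma (2 - \<alpha>) / t powr (1 - \<alpha>) / Gamma (1 - \<alpha>) * (p * Beta p (1 - \<alpha>) * t powr (p - \<alpha>))
       = L_power_coeff \<alpha> p * t powr (p - 1)"
proof -
  have "Gamma (1 - \<alpha>) > 0"
    using \<alpha> by (intro Gamma_real_pos) simp
  moreover have "t powr (p - \<alpha>) = t powr (p - 1) * t powr (1 - \<alpha>)"
    using powr_add[of t "p - 1" "1 - \<alpha>"] by simp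
  moreover have "t powr (1 - \<alpha>) > 0"
    using t by simp
  ultimately show ?thesis
    using Gamma_plus1_of_pos[OF p]
    by (simp add: L_power_coeff_def Beta_def field_simps)
qed

lemma has_vector_derivative_frac_series_sum:
  fixes w :: "'i \<Rightarrow> nat \<Rightarrow> 'v::banach"
  assumes coeffs: "\<And>k. k \<in> K \<Longrightarrow> entire_coeffs (a k) (w k)"
    and x: "\<And>\<tau>. \<tau> > 0 \<Longrightarrow> x \<tau> = c + (\<Sum>k\<in>K. frac_series (a k) (b k) (w k) \<tau>)"
    and t: "t > 0"
  shows "(x has_vector_derivative (\<Sum>k\<in>K. frac_series (\<lambda>n. a k n * (real n + b k)) (b k - 1) (w k) t)) (at t)"
proof -
  have "((\<lambda>s. c + (\<Sum>k\<in>K. frac_series (a k) (b k) (w k) s)) has_vector_derivative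
      0 + (\<Sum>k\<in>K. frac_series (\<lambda>n. a k n * (real n + b k)) (b k - 1) (w k) t)) (at t)"
    by (intro has_vector_derivative_add has_vector_derivative_const has_vector_derivative_sum
        has_vector_derivative_frac_series coeffs t)
  then show ?thesis
    unfolding add_0_left
    by (rule has_vector_derivative_transform_within_open[of _ _ _ "{0<..}"]) (use t x in auto)
qed

lemma L_scaled_integral_frac_series_deriv:
  fixes w :: "nat \<Rightarrow> 'v::euclidean_space"
  assumes coeffs: "entire_coeffs a w" and b: "b > 0" and \<alpha>: "\<alpha> < 1" and t: "t > 0"
  shows "(Gamma (2 - \<alpha>) / t powr (1 - \<alpha>) / Gamma (1 - \<alpha>)) *\<^sub>R
           integral {0..t} (\<lambda>\<tau>. (t - \<tau>) powr (- \<alpha>) *\<^sub>R frac_series (\<lambda>n. a n * (real n + b)) (b - 1) w \<tau>)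
         = frac_series (\<lambda>n. a n * L_power_coeff \<alpha> (real n + b)) (b - 1) w t"
proof -
  define C where "C = Gamma (2 - \<alpha>) / t powr (1 - \<alpha>) / Gamma (1 - \<alpha>)"
  have "(\<lambda>n. (C * (a n * (real n + b) * Beta (real n + (b - 1) + 1) (1 - \<alpha>) * t powr (real n + (b - 1) + 1 - \<alpha>)))
      *\<^sub>R w n) sums (C *\<^sub>R integral {0..t} (\<lambda>\<tau>. (t - \<tau>) powr (- \<alpha>) *\<^sub>R frac_series (\<lambda>n. a n * (real n + b)) (b - 1) w \<tau>))"
    using sums_integral_kernel_frac_series[OF entire_coeffs_mult_index[OF coeffs], of "b - 1" \<alpha> t] b \<alpha> t
    unfolding scaleR_scaleR[symmetric] by (intro sums_scaleR_right) simp
  moreover have "C * (a n * (real n + b) * Beta (real n + (b - 1) + 1) (1 - \<alpha>) * t powr (real n + (b - 1) + 1 - \<alpha>))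
      = a n * L_power_coeff \<alpha> (real n + b) * t powr (real n + (b - 1))" for n
  proof -
    have "real n + b > 0"
      using b by simp
    then have "C * ((real n + b) * Beta (real n + b) (1 - \<alpha>) * t powr (real n + b - \<alpha>))
        = L_power_coeff \<alpha> (real n + b) * t powr (real n + b - 1)"
      unfolding C_def using t \<alpha> by (rule L_power_coeff_eq_Beta)
    then show ?thesis
      by (simp add: mult_ac add_diff_eq)
  qed
  ultimately show ?thesis
    by (simp add: C_def frac_series_def sums_iff)
qed

lemma L_deriv_frac_series_sum:
  fixes a :: "'i \<Rightarrow> nat \<Rightarrow> real" and b :: "'i \<Rightarrow> real" and w :: "'i \<Rightarrow> nat \<Rightarrow> complex^'d"
    and x :: "real \<Rightarrow> complex^'d"
  assumes \<alpha>: "\<alpha> < 1" and t: "t > 0" and K: "finite K"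
    and b: "\<And>k. k \<in> K \<Longrightarrow> b k > 0" and coeffs: "\<And>k. k \<in> K \<Longrightarrow> entire_coeffs (a k) (w k)"
    and x: "\<And>\<tau>. \<tau> > 0 \<Longrightarrow> x \<tau> = c + (\<Sum>k\<in>K. frac_series (a k) (b k) (w k) \<tau>)"
  shows "\<forall>\<tau>\<in>{0<..<t}. x differentiable (at \<tau>)"
    and "(\<lambda>\<tau>. (t - \<tau>) powr (- \<alpha>) *\<^sub>R vector_derivative x (at \<tau>)) integrable_on {0..t}"
    and "L_deriv \<alpha> x t = (\<Sum>k\<in>K. frac_series (\<lambda>n. a k n * L_power_coeff \<alpha> (real n + b k)) (b k - 1) (w k) t)"
proof -
  define x' where "x' \<tau> = (\<Sum>k\<in>K. frac_series (\<lambda>n. a k n * (real n + b k)) (b k - 1) (w k) \<tau>)" for \<tau>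
  have x': "(x has_vector_derivative x' \<tau>) (at \<tau>)" if "\<tau> > 0" for \<tau>
    unfolding x'_def using coeffs x that by (rule has_vector_derivative_frac_series_sum)
  then show "\<forall>\<tau>\<in>{0<..<t}. x differentiable (at \<tau>)"
    unfolding differentiable_def has_vector_derivative_def by fastforce
  define I where "I k = integral {0..t} (\<lambda>\<tau>. (t - \<tau>) powr (- \<alpha>) *\<^sub>R
    frac_series (\<lambda>n. a k n * (real n + b k)) (b k - 1) (w k) \<tau>)" for k
  have "((\<lambda>\<tau>. (t - \<tau>) powr (- \<alpha>) *\<^sub>R x' \<tau>) has_integral (\<Sum>k\<in>K. I k)) {0..t}"
    unfolding x'_def scaleR_sum_right I_def using \<alpha> t b coeffs
    by (intro has_integral_sum K integrable_integral integrable_kernel_frac_series entire_coeffs_mult_index)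
      auto
  \<comment> \<open>\<open>x\<close> is differentiable on \<open>(0, t]\<close>, so the integrands differ only at \<open>\<tau> = 0\<close>.\<close>
  then have kernel_deriv: "((\<lambda>\<tau>. (t - \<tau>) powr (- \<alpha>) *\<^sub>R vector_derivative x (at \<tau>)) has_integral (\<Sum>k\<in>K. I k)) {0..t}"
    by (rule has_integral_spike_finite[of "{0}", rotated 2]) (auto simp: vector_derivative_at[OF x'])
  then show "(\<lambda>\<tau>. (t - \<tau>) powr (- \<alpha>) *\<^sub>R vector_derivative x (at \<tau>)) integrable_on {0..t}"
    by blast
  show "L_deriv \<alpha> x t = (\<Sum>k\<in>K. frac_series (\<lambda>n. a k n * L_power_coeff \<alpha> (real n + b k)) (b k - 1) (w k) t)"
    unfolding L_deriv_def caputo_def integral_unique[OF kernel_deriv] scaleR_scaleR[symmetric] scaleR_sum_right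
    using L_scaled_integral_frac_series_deriv[OF coeffs b \<alpha> t] by (intro sum.cong refl) (simp add: I_def)
qed

lemma matrix_vector_mult_scaleR_right:
  fixes A :: "'a::real_algebra_1^'n^'m"
  shows "A *v (c *\<^sub>R v) = c *\<^sub>R (A *v v)"
  by (simp add: vec_eq_iff matrix_vector_mult_def scaleR_sum_right)

lemma matrix_vector_mult_scaleR_left:
  fixes A :: "'a::real_algebra_1^'n^'m"
  shows "(c *\<^sub>R A) *v v = c *\<^sub>R (A *v v)"
  by (simp add: vec_eq_iff matrix_vector_mult_def scaleR_sum_right)

lemma matpow_scaleR:
  fixes A :: "'a::real_algebra_1^'n^'n"
  shows "matpow (s *\<^sub>R A) n = s ^ n *\<^sub>R matpow A n"
  by (induction n) (simp_all add: matrix_scalar_ac scalar_matrix_assoc[symmetric])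

lemma matpow_Suc_vec: "matpow A (Suc n) *v v = A *v (matpow A n *v v)"
  by (simp add: matrix_vector_mul_assoc)

lemma linear_matrix_mult_left: "linear (\<lambda>N::'a::real_algebra_1^'n^'m. A ** N)"
  by (rule linearI) (simp_all add: matrix_add_ldistrib matrix_scalar_ac scalar_matrix_assoc)

lemma norm_matpow_le:
  fixes A :: "complex^'d^'d"
  obtains K where "K \<ge> 0" "\<And>n. norm (matpow A n) \<le> norm (mat 1 :: complex^'d^'d) * K ^ n"
proof -
  have "bounded_linear (\<lambda>N::complex^'d^'d. A ** N)"
    using linear_matrix_mult_left linear_conv_bounded_linear by blast
  then obtain K where K: "K > 0" "\<And>N::complex^'d^'d. norm (A ** N) \<le> norm N * K"
    using bounded_linear.pos_bounded by blast
  have "norm (matpow A n) \<le> norm (mat 1 :: complex^'d^'d) * K ^ n" for n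
  proof (induction n)
    case (Suc n)
    have "norm (matpow A (Suc n)) \<le> norm (matpow A n) * K"
      by (simp add: K(2))
    also have "\<dots> \<le> norm (mat 1 :: complex^'d^'d) * K ^ n * K"
      using K(1) by (intro mult_right_mono[OF Suc.IH]) simp
    finally show ?case
      by (simp add: mult_ac)
  qed simp
  with K(1) show thesis
    by (intro that[of K]) auto
qed

lemma norm_matpow_vec_le:
  fixes A :: "complex^'d^'d"
  obtains K where "K \<ge> 0" "\<And>n. norm (matpow A n *v v) \<le> norm v * K ^ n"
proof -
  obtain K where K: "K > 0" "\<And>y. norm (A *v y) \<le> norm y * K"
    using bounded_linear.pos_bounded[OF matrix_vector_mul_bounded_linear[of A]] by blast
  have "norm (matpow A n *v v) \<le> norm v * K ^ n" for n
  proof (induction n)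
    case (Suc n)
    have "norm (matpow A (Suc n) *v v) \<le> norm (matpow A n *v v) * K"
      unfolding matpow_Suc_vec by (rule K(2))
    also have "\<dots> \<le> norm v * K ^ n * K"
      using K(1) by (intro mult_right_mono[OF Suc.IH]) simp
    finally show ?case
      by (simp add: mult_ac)
  qed (simp add: matrix_vector_mul_lid)
  with K(1) show thesis
    by (intro that[of K]) auto
qed

lemma mittag_coeff_Suc:
  "mittag_coeff \<alpha> (Suc n) = mittag_coeff \<alpha> n * (Gamma (2 - \<alpha>) * (Gamma (real n + 2) / Gamma (real n + 2 - \<alpha>)))"
proof -
  have "real (Suc n) + 1 = real n + 2"
    by simp
  then show ?thesis
    unfolding mittag_coeff_def by (simp add: prod.nat_ivl_Suc' algebra_simps)
qed

lemma mittag_coeff_pos: "0 < \<alpha> \<Longrightarrow> \<alpha> < 1 \<Longrightarrow> mittag_coeff \<alpha> n > 0"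
  unfolding mittag_coeff_def
  by (intro mult_pos_pos zero_less_power prod_pos ballI divide_pos_pos Gamma_real_pos) auto

lemma mittag_coeff_ratio_tendsto_0:
  assumes "0 < \<alpha>" "\<alpha> < 1"
  shows "(\<lambda>n. (1 / mittag_coeff \<alpha> (Suc n)) / (1 / mittag_coeff \<alpha> n)) \<longlonglongrightarrow> 0"
proof -
  have "(\<lambda>n. 1 / Gamma (2 - \<alpha>) * (Gamma (real n + 2 - \<alpha>) / Gamma (real n + 2))) \<longlonglongrightarrow> 1 / Gamma (2 - \<alpha>) * 0"
    using assms by (intro tendsto_mult tendsto_const Gamma_shift_ratio_tendsto_0) auto
  moreover have "(1 / mittag_coeff \<alpha> (Suc n)) / (1 / mittag_coeff \<alpha> n)
      = 1 / Gamma (2 - \<alpha>) * (Gamma (real n + 2 - \<alpha>) / Gamma (real n + 2))" for n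
    using mittag_coeff_pos[OF assms, of n] assms
    by (simp add: mittag_coeff_Suc Gamma_real_pos field_simps)
  ultimately show ?thesis
    by simp
qed

lemma L_power_coeff_mittag:
  assumes "0 < \<alpha>" "\<alpha> < 1"
  shows "L_power_coeff \<alpha> (real n + 1) = mittag_coeff \<alpha> (Suc n) / mittag_coeff \<alpha> n"
  using mittag_coeff_pos[OF assms, of n]
  by (simp add: mittag_coeff_Suc L_power_coeff_def add.assoc)

lemma linear_matrix_vector_mult_left: "linear (\<lambda>N::'a::real_algebra_1^'n^'m. N *v v)"
  by (rule linearI) (simp_all add: matrix_vector_mult_add_rdistrib matrix_vector_mult_scaleR_left)

lemma entire_coeffs_mittag:
  fixes A :: "complex^'d^'d"
  assumes "0 < \<alpha>" "\<alpha> < 1"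
  shows "entire_coeffs (\<lambda>n. 1 / mittag_coeff \<alpha> n) (matpow A)"
proof -
  obtain K where "K \<ge> 0" "\<And>n. norm (matpow A n) \<le> norm (mat 1 :: complex^'d^'d) * K ^ n"
    using norm_matpow_le[of A] by blast
  moreover have "1 / mittag_coeff \<alpha> n \<noteq> 0" for n
    using mittag_coeff_pos[OF assms, of n] by simp
  ultimately show ?thesis
    by (intro entire_coeffs_ratio_tendsto_0 mittag_coeff_ratio_tendsto_0 assms)
qed

lemma mittag_mat_vec_sums:
  fixes A :: "complex^'d^'d"
  assumes "0 < \<alpha>" "\<alpha> < 1"
  shows "(\<lambda>n. (\<tau> ^ n / mittag_coeff \<alpha> n) *\<^sub>R (matpow A n *v x0)) sums (mittag_mat \<alpha> (\<tau> *\<^sub>R A) *v x0)"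
proof -
  have "summable (\<lambda>n. norm ((1 / mittag_coeff \<alpha> n) *\<^sub>R matpow (\<tau> *\<^sub>R A) n))"
    using entire_coeffsD[OF entire_coeffs_mittag[OF assms, of A], of "\<bar>\<tau>\<bar>"]
    by (simp add: matpow_scaleR power_abs mult_ac)
  then have "(\<lambda>n. (1 / mittag_coeff \<alpha> n) *\<^sub>R matpow (\<tau> *\<^sub>R A) n) sums mittag_mat \<alpha> (\<tau> *\<^sub>R A)"
    unfolding mittag_mat_def by (rule summable_sums[OF summable_norm_cancel])
  moreover have "bounded_linear (\<lambda>N::complex^'d^'d. N *v x0)"
    using linear_matrix_vector_mult_left linear_conv_bounded_linear by blast
  ultimately have "(\<lambda>n. ((1 / mittag_coeff \<alpha> n) *\<^sub>R matpow (\<tau> *\<^sub>R A) n) *v x0) sums (mittag_mat \<alpha> (\<tau> *\<^sub>R A) *v x0)"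
    by (rule bounded_linear.sums[rotated])
  then show ?thesis
    by (simp add: matpow_scaleR matrix_vector_mult_scaleR_left)
qed

lemma mittag_mat_vec_eq_frac_series:
  fixes A :: "complex^'d^'d"
  assumes "0 < \<alpha>" "\<alpha> < 1" and \<tau>: "\<tau> > 0"
  shows "mittag_mat \<alpha> (\<tau> *\<^sub>R A) *v x0
    = x0 + frac_series (\<lambda>n. 1 / mittag_coeff \<alpha> (Suc n)) 1 (\<lambda>n. matpow A (Suc n) *v x0) \<tau>"
proof -
  have "(\<lambda>n. (\<tau> ^ Suc n / mittag_coeff \<alpha> (Suc n)) *\<^sub>R (matpow A (Suc n) *v x0))
      sums (mittag_mat \<alpha> (\<tau> *\<^sub>R A) *v x0 - x0)"
    using mittag_mat_vec_sums[OF assms(1,2), of \<tau> A x0]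
    by (subst sums_Suc_iff) (simp add: mittag_coeff_def)
  moreover have "\<tau> ^ Suc n = \<tau> powr (real n + 1)" for n
    using powr_realpow[OF \<tau>, of "Suc n"] by (simp add: add.commute)
  ultimately show ?thesis
    by (simp add: frac_series_def sums_iff)
qed

lemma mittag_mat_zero_vec:
  fixes x0 :: "complex^'d"
  assumes "0 < \<alpha>" "\<alpha> < 1"
  shows "mittag_mat \<alpha> 0 *v x0 = x0"
proof -
  have "(\<lambda>n. ((0::real) ^ n / mittag_coeff \<alpha> n) *\<^sub>R (matpow (0::complex^'d^'d) n *v x0))
      = (\<lambda>n. if n = 0 then x0 else 0)"
    by (auto simp: mittag_coeff_def)
  then show ?thesis
    using mittag_mat_vec_sums[OF assms, of 0 0 x0] sums_single[of 0 "\<lambda>_. x0"] sums_unique2 by fastforce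
qed

lemma entire_coeffs_mittag_shift:
  fixes A :: "complex^'d^'d"
  assumes "0 < \<alpha>" "\<alpha> < 1"
  shows "entire_coeffs (\<lambda>n. 1 / mittag_coeff \<alpha> (Suc n)) (\<lambda>n. matpow A (Suc n) *v x0)"
proof -
  obtain K where K: "K \<ge> 0" "\<And>n. norm (matpow A n *v x0) \<le> norm x0 * K ^ n"
    using norm_matpow_vec_le[of A x0] by blast
  have "norm (matpow A (Suc n) *v x0) \<le> (norm x0 * K) * K ^ n" for n
    using K(2)[of "Suc n"] by (simp add: mult_ac)
  moreover have "1 / mittag_coeff \<alpha> (Suc n) \<noteq> 0" for n
    using mittag_coeff_pos[OF assms, of "Suc n"] by simp
  ultimately show ?thesis
    using K(1) by (intro entire_coeffs_ratio_tendsto_0 LIMSEQ_Suc[OF mittag_coeff_ratio_tendsto_0] assms)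
qed

lemma frac_series_L_mittag:
  fixes A :: "complex^'d^'d"
  assumes "0 < \<alpha>" "\<alpha> < 1" and t: "t > 0"
  shows "frac_series (\<lambda>n. 1 / mittag_coeff \<alpha> (Suc n) * L_power_coeff \<alpha> (real n + 1)) 0
           (\<lambda>n. matpow A (Suc n) *v x0) t = A *v (mittag_mat \<alpha> (t *\<^sub>R A) *v x0)"
proof -
  have "(\<lambda>n. A *v ((t ^ n / mittag_coeff \<alpha> n) *\<^sub>R (matpow A n *v x0))) sums (A *v (mittag_mat \<alpha> (t *\<^sub>R A) *v x0))"
    by (rule bounded_linear.sums[OF matrix_vector_mul_bounded_linear mittag_mat_vec_sums[OF assms(1,2)]])
  moreover have "1 / mittag_coeff \<alpha> (Suc n) * L_power_coeff \<alpha> (real n + 1) * t powr (real n + 0)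
      = t ^ n / mittag_coeff \<alpha> n" for n
    using mittag_coeff_pos[OF assms(1,2), of n] mittag_coeff_pos[OF assms(1,2), of "Suc n"] t
    by (simp add: L_power_coeff_mittag[OF assms(1,2)] powr_realpow)
  ultimately show ?thesis
    by (simp add: frac_series_def sums_iff matrix_vector_mult_scaleR_right matrix_vector_mul_assoc)
qed

definition forcing_coeff :: "real \<Rightarrow> real \<Rightarrow> nat \<Rightarrow> real" where
  "forcing_coeff \<alpha> \<delta> j = (\<Prod>i=2..j+2. Gamma (real i - \<alpha> + \<delta>)) /
     (Gamma (2 - \<alpha>) ^ (j + 1) * (\<Prod>i=2..j+2. Gamma (real i + \<delta>)))"

lemma forcing_coeff_0: "forcing_coeff \<alpha> \<delta> 0 = Gamma (2 - \<alpha> + \<delta>) / (Gamma (2 - \<alpha>) * Gamma (2 + \<delta>))"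
  by (simp add: forcing_coeff_def)

lemma forcing_coeff_Suc:
  "forcing_coeff \<alpha> \<delta> (Suc j)
     = forcing_coeff \<alpha> \<delta> j * (Gamma (real j + 3 - \<alpha> + \<delta>) / (Gamma (2 - \<alpha>) * Gamma (real j + 3 + \<delta>)))"
proof -
  have "Suc j + 2 = Suc (j + 2)" "real (Suc (j + 2)) = real j + 3"
    by simp_all
  then show ?thesis
    unfolding forcing_coeff_def by (simp add: prod.nat_ivl_Suc' algebra_simps)
qed

lemma forcing_coeff_pos: "0 < \<alpha> \<Longrightarrow> \<alpha> < 1 \<Longrightarrow> \<delta> > 0 \<Longrightarrow> forcing_coeff \<alpha> \<delta> j > 0"
  unfolding forcing_coeff_def
  by (intro divide_pos_pos mult_pos_pos zero_less_power prod_pos ballI Gamma_real_pos) auto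

lemma forcing_coeff_ratio_tendsto_0:
  assumes "0 < \<alpha>" "\<alpha> < 1" "\<delta> > 0"
  shows "(\<lambda>j. forcing_coeff \<alpha> \<delta> (Suc j) / forcing_coeff \<alpha> \<delta> j) \<longlonglongrightarrow> 0"
proof -
  have "(\<lambda>j. 1 / Gamma (2 - \<alpha>) * (Gamma (real j + (3 + \<delta>) - \<alpha>) / Gamma (real j + (3 + \<delta>))))
      \<longlonglongrightarrow> 1 / Gamma (2 - \<alpha>) * 0"
    using assms by (intro tendsto_mult tendsto_const Gamma_shift_ratio_tendsto_0) auto
  moreover have "forcing_coeff \<alpha> \<delta> (Suc j) / forcing_coeff \<alpha> \<delta> j
      = 1 / Gamma (2 - \<alpha>) * (Gamma (real j + (3 + \<delta>) - \<alpha>) / Gamma (real j + (3 + \<delta>)))" for j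
    using forcing_coeff_pos[OF assms, of j] by (simp add: forcing_coeff_Suc algebra_simps)
  ultimately show ?thesis
    by simp
qed

lemma entire_coeffs_forcing:
  fixes A :: "complex^'d^'d"
  assumes "0 < \<alpha>" "\<alpha> < 1" "\<delta> > 0"
  shows "entire_coeffs (forcing_coeff \<alpha> \<delta>) (\<lambda>j. matpow A j *v v)"
proof -
  obtain K where "K \<ge> 0" "\<And>n. norm (matpow A n *v v) \<le> norm v * K ^ n"
    using norm_matpow_vec_le[of A v] by blast
  moreover have "forcing_coeff \<alpha> \<delta> j \<noteq> 0" for j
    using forcing_coeff_pos[OF assms, of j] by simp
  ultimately show ?thesis
    by (intro entire_coeffs_ratio_tendsto_0 forcing_coeff_ratio_tendsto_0 assms)
qed

lemma forcing_coeff_L_power_coeff: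
  assumes "0 < \<alpha>" "\<alpha> < 1" "\<delta> > 0"
  shows "forcing_coeff \<alpha> \<delta> 0 * L_power_coeff \<alpha> (real 0 + (1 + \<delta>)) = 1"
    and "forcing_coeff \<alpha> \<delta> (Suc j) * L_power_coeff \<alpha> (real (Suc j) + (1 + \<delta>)) = forcing_coeff \<alpha> \<delta> j"
proof -
  have pos: "Gamma (2 - \<alpha>) > 0" "Gamma (2 + \<delta>) > 0" "Gamma (2 - \<alpha> + \<delta>) > 0"
    "Gamma (real j + 3 + \<delta>) > 0" "Gamma (real j + 3 - \<alpha> + \<delta>) > 0"
    using assms by (auto intro!: Gamma_real_pos)
  show "forcing_coeff \<alpha> \<delta> 0 * L_power_coeff \<alpha> (real 0 + (1 + \<delta>)) = 1"
    using pos by (simp add: forcing_coeff_0 L_power_coeff_def) (simp add: algebra_simps)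
  have "real (Suc j) + (1 + \<delta>) + 1 = real j + 3 + \<delta>"
    by simp
  then show "forcing_coeff \<alpha> \<delta> (Suc j) * L_power_coeff \<alpha> (real (Suc j) + (1 + \<delta>)) = forcing_coeff \<alpha> \<delta> j"
    using pos by (simp add: forcing_coeff_Suc L_power_coeff_def algebra_simps)
qed

lemma frac_series_L_forcing:
  fixes A :: "complex^'d^'d"
  assumes "0 < \<alpha>" "\<alpha> < 1" "\<delta> > 0" and t: "t > 0"
  shows "frac_series (\<lambda>j. forcing_coeff \<alpha> \<delta> j * L_power_coeff \<alpha> (real j + (1 + \<delta>))) \<delta> (\<lambda>j. matpow A j *v v) t
       = t powr \<delta> *\<^sub>R v + A *v frac_series (forcing_coeff \<alpha> \<delta>) (1 + \<delta>) (\<lambda>j. matpow A j *v v) t"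
proof -
  define g where "g j = (forcing_coeff \<alpha> \<delta> j * L_power_coeff \<alpha> (real j + (1 + \<delta>)) * t powr (real j + \<delta>))
    *\<^sub>R (matpow A j *v v)" for j
  have "(\<lambda>j. A *v ((forcing_coeff \<alpha> \<delta> j * t powr (real j + (1 + \<delta>))) *\<^sub>R (matpow A j *v v)))
      sums (A *v frac_series (forcing_coeff \<alpha> \<delta>) (1 + \<delta>) (\<lambda>j. matpow A j *v v) t)"
    using t by (intro bounded_linear.sums[OF matrix_vector_mul_bounded_linear] frac_series_sums
        entire_coeffs_forcing assms) auto
  moreover have "g (Suc j) = A *v ((forcing_coeff \<alpha> \<delta> j * t powr (real j + (1 + \<delta>))) *\<^sub>R (matpow A j *v v))" for j
    using forcing_coeff_L_power_coeff(2)[OF assms(1-3), of j]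
    by (simp add: g_def matrix_vector_mult_scaleR_right matrix_vector_mul_assoc algebra_simps)
  ultimately have "g sums (A *v frac_series (forcing_coeff \<alpha> \<delta>) (1 + \<delta>) (\<lambda>j. matpow A j *v v) t + g 0)"
    by (simp add: sums_Suc_iff[symmetric])
  moreover have "g 0 = t powr \<delta> *\<^sub>R v"
    using forcing_coeff_L_power_coeff(1)[OF assms(1-3)] by (simp add: g_def)
  ultimately have "g sums (t powr \<delta> *\<^sub>R v + A *v frac_series (forcing_coeff \<alpha> \<delta>) (1 + \<delta>) (\<lambda>j. matpow A j *v v) t)"
    by (metis add.commute)
  then show ?thesis
    unfolding frac_series_def g_def by (simp add: sums_iff)
qed

lemma vec_lambda_eq_sum_axis:
  "(\<chi> k. c k * complex_of_real (s k)) = (\<Sum>k\<in>UNIV. s k *\<^sub>R axis k (c k))"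
  by (simp add: vec_eq_iff sum_component axis_def if_distrib cong: if_cong)
    (simp add: scaleR_conv_of_real mult.commute)

lemma matpow_series_forcing_eq_sum:
  fixes A :: "complex^'d^'d"
  assumes "0 < \<alpha>" "\<alpha> < 1" "\<And>k. \<delta> k > 0" and \<tau>: "\<tau> \<ge> 0"
  shows "(\<Sum>j. matpow A j *v (\<chi> k. l k * complex_of_real (forcing_coeff \<alpha> (\<delta> k) j * \<tau> powr (real j + 1 + \<delta> k))))
       = (\<Sum>k\<in>UNIV. frac_series (forcing_coeff \<alpha> (\<delta> k)) (1 + \<delta> k) (\<lambda>j. matpow A j *v axis k (l k)) \<tau>)"
proof -
  let ?f = "\<lambda>k j. (forcing_coeff \<alpha> (\<delta> k) j * \<tau> powr (real j + (1 + \<delta> k))) *\<^sub>R (matpow A j *v axis k (l k))"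
  have "matpow A j *v (\<chi> k. l k * complex_of_real (forcing_coeff \<alpha> (\<delta> k) j * \<tau> powr (real j + 1 + \<delta> k)))
      = (\<Sum>k\<in>UNIV. ?f k j)" for j
    unfolding vec_lambda_eq_sum_axis
    by (simp add: linear_sum[OF bounded_linear.linear[OF matrix_vector_mul_bounded_linear]] matrix_vector_mult_scaleR_right add.assoc)
  moreover have "summable (?f k)" for k
    using frac_series_sums[OF entire_coeffs_forcing[OF assms(1,2,3)] \<tau>] by (rule sums_summable)
  ultimately show ?thesis
    by (simp add: suminf_sum frac_series_def)
qed

lemma sum_UNIV_option: "(\<Sum>k\<in>UNIV. f k) = f None + (\<Sum>k\<in>UNIV. f (Some (k::'a::finite)))"
  by (simp add: UNIV_option_conv sum.reindex)

text \<open>The solution as a sum of series \<open>frac_series\<close> indexed by \<open>'d option\<close>: \<open>None\<close> is the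
  Mittag-Leffler part without its constant term \<open>x0\<close>, \<open>Some k\<close> the response to the \<open>k\<close>-th
  forcing component.\<close>
definition solution_coeff :: "real \<Rightarrow> ('d \<Rightarrow> real) \<Rightarrow> 'd option \<Rightarrow> nat \<Rightarrow> real" where
  "solution_coeff \<alpha> \<delta> = case_option (\<lambda>n. 1 / mittag_coeff \<alpha> (Suc n)) (\<lambda>k. forcing_coeff \<alpha> (\<delta> k))"

definition solution_exponent :: "('d \<Rightarrow> real) \<Rightarrow> 'd option \<Rightarrow> real" where
  "solution_exponent \<delta> = case_option 1 (\<lambda>k. 1 + \<delta> k)"

definition solution_vector :: "complex^'d^'d \<Rightarrow> complex^'d \<Rightarrow> ('d \<Rightarrow> complex) \<Rightarrow> 'd option \<Rightarrow> nat \<Rightarrow> complex^'d" where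
  "solution_vector A x0 l = case_option (\<lambda>n. matpow A (Suc n) *v x0) (\<lambda>k j. matpow A j *v axis k (l k))"

lemma entire_coeffs_solution:
  assumes "0 < \<alpha>" "\<alpha> < 1" "\<And>k. \<delta> k > 0"
  shows "entire_coeffs (solution_coeff \<alpha> \<delta> k) (solution_vector A x0 l k)"
  using entire_coeffs_mittag_shift[OF assms(1,2)] entire_coeffs_forcing[OF assms]
  by (cases k) (simp_all add: solution_coeff_def solution_vector_def)

lemma solution_exponent_pos: "(\<And>k. \<delta> k > 0) \<Longrightarrow> solution_exponent \<delta> k > 0"
  by (cases k) (simp_all add: solution_exponent_def add_pos_pos)

lemma solution_eq_frac_series_sum:
  fixes A :: "complex^'d^'d"
  assumes \<alpha>: "0 < \<alpha>" "\<alpha> < 1" and \<delta>: "\<And>k. \<delta> k > 0" and \<tau>: "\<tau> > 0"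
  shows "mittag_mat \<alpha> (\<tau> *\<^sub>R A) *v x0
      + (\<Sum>j. matpow A j *v (\<chi> k. l k * complex_of_real (forcing_coeff \<alpha> (\<delta> k) j * \<tau> powr (real j + 1 + \<delta> k))))
    = x0 + (\<Sum>k\<in>UNIV. frac_series (solution_coeff \<alpha> \<delta> k) (solution_exponent \<delta> k) (solution_vector A x0 l k) \<tau>)"
  unfolding matpow_series_forcing_eq_sum[OF \<alpha> \<delta> less_imp_le[OF \<tau>]] mittag_mat_vec_eq_frac_series[OF \<alpha> \<tau>]
  by (simp add: sum_UNIV_option solution_coeff_def solution_exponent_def solution_vector_def add.assoc)

lemma L_power_image_solution:
  fixes A :: "complex^'d^'d"
  assumes \<alpha>: "0 < \<alpha>" "\<alpha> < 1" and \<delta>: "\<And>k. \<delta> k > 0" and t: "t > 0"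
  shows "(\<Sum>k\<in>UNIV. frac_series (\<lambda>n. solution_coeff \<alpha> \<delta> k n * L_power_coeff \<alpha> (real n + solution_exponent \<delta> k))
           (solution_exponent \<delta> k - 1) (solution_vector A x0 l k) t)
    = A *v (mittag_mat \<alpha> (t *\<^sub>R A) *v x0
        + (\<Sum>j. matpow A j *v (\<chi> k. l k * complex_of_real (forcing_coeff \<alpha> (\<delta> k) j * t powr (real j + 1 + \<delta> k)))))
      + (\<chi> k. l k * complex_of_real (t powr \<delta> k))"
  unfolding matpow_series_forcing_eq_sum[OF \<alpha> \<delta> less_imp_le[OF t]]
  using frac_series_L_mittag[OF \<alpha> t, of A x0] frac_series_L_forcing[OF \<alpha> \<delta> t, of _ A]
  by (simp add: sum_UNIV_option solution_coeff_def solution_exponent_def solution_vector_def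
      vec_lambda_eq_sum_axis sum.distrib
      matrix_vector_right_distrib linear_sum[OF bounded_linear.linear[OF matrix_vector_mul_bounded_linear]]
      add_ac del: matpow.simps)

theorem mainTheorem13:
  fixes \<alpha> T :: real and A :: "complex^'d^'d" and x0 :: "complex^'d"
    and l :: "'d \<Rightarrow> complex" and \<delta> :: "'d \<Rightarrow> real"
    and \<nu> :: "nat \<Rightarrow> real \<Rightarrow> complex^'d" and x \<theta> :: "real \<Rightarrow> complex^'d"
  assumes "0 < \<alpha>" "\<alpha> < 1" "0 < T"
    and "\<forall>k. 0 < \<delta> k"
    and "\<theta> = (\<lambda>t. \<chi> k. l k * complex_of_real (t powr \<delta> k))"
    and "\<nu> = (\<lambda>j t. \<chi> k. l k * complex_of_real
            ((\<Prod>i=2..j+2. Gamma (real i - \<alpha> + \<delta> k)) /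
             (Gamma (2 - \<alpha>) ^ (j + 1) * (\<Prod>i=2..j+2. Gamma (real i + \<delta> k)))
             * t powr (real j + 1 + \<delta> k)))"
    and "x = (\<lambda>t. mittag_mat \<alpha> (t *\<^sub>R A) *v x0 + (\<Sum>j. matpow A j *v \<nu> j t))"
  shows "x 0 = x0 \<and>
    (\<forall>t\<in>{0<..T}.
       (\<forall>\<tau>\<in>{0<..<t}. x differentiable (at \<tau>)) \<and>
       (\<lambda>\<tau>. ((t - \<tau>) powr (- \<alpha>)) *\<^sub>R vector_derivative x (at \<tau>)) integrable_on {0..t} \<and>
       L_deriv \<alpha> x t = A *v x t + \<theta> t)"
proof -
  have \<alpha>: "0 < \<alpha>" "\<alpha> < 1" and \<delta>: "\<And>k. 0 < \<delta> k"
    using assms(1,2,4) by auto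
  have x: "x = (\<lambda>t. mittag_mat \<alpha> (t *\<^sub>R A) *v x0
      + (\<Sum>j. matpow A j *v (\<chi> k. l k * complex_of_real (forcing_coeff \<alpha> (\<delta> k) j * t powr (real j + 1 + \<delta> k)))))"
    by (simp add: assms(6,7) forcing_coeff_def)
  have x_eq: "x \<tau> = x0 + (\<Sum>k\<in>UNIV. frac_series (solution_coeff \<alpha> \<delta> k) (solution_exponent \<delta> k)
      (solution_vector A x0 l k) \<tau>)" if "\<tau> > 0" for \<tau>
    unfolding x by (rule solution_eq_frac_series_sum[OF \<alpha> \<delta> that])
  have "x 0 = x0"
    using matpow_series_forcing_eq_sum[OF \<alpha> \<delta> order_refl, of A l] by (simp add: x mittag_mat_zero_vec[OF \<alpha>])
  moreover have "(\<forall>\<tau>\<in>{0<..<t}. x differentiable (at \<tau>)) \<and>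
       (\<lambda>\<tau>. ((t - \<tau>) powr (- \<alpha>)) *\<^sub>R vector_derivative x (at \<tau>)) integrable_on {0..t} \<and>
       L_deriv \<alpha> x t = A *v x t + \<theta> t" if "t \<in> {0<..T}" for t
  proof -
    have t: "t > 0"
      using that by simp
    note L = L_deriv_frac_series_sum[where a = "solution_coeff \<alpha> \<delta>" and b = "solution_exponent \<delta>"
        and w = "solution_vector A x0 l", OF \<alpha>(2) t finite_class.finite_UNIV solution_exponent_pos[OF \<delta>]
        entire_coeffs_solution[OF \<alpha> \<delta>] x_eq]
    have "L_deriv \<alpha> x t = A *v x t + \<theta> t"
      using L(3) unfolding L_power_image_solution[OF \<alpha> \<delta> t] by (simp add: x assms(5))
    with L(1,2) show ?thesis
      by blast
  qed
  ultimately show ?thesis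
    by blast
qed

end
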